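(* Let $k,n$ be non-negative integers and let $p_1,\dots,p_{k+1}$ be primes (not necessarily distinct) with each $p_i\equiv 3,5,$ or $7\pmod 8$. Then for every integer $j$ not divisible by $p_{k+1}$, $$\mathcal{J}_{6}\Big(3p_1^2p_2^2\cdots p_k^2\,p_{k+1}\,\big(8p_{k+1}n+8j+p_{k+1}\big)\Big)\equiv 0\pmod 2.$$
   Context: Let $q=e^{2\pi i\tau}$, $(a;q)_\infty=\prod_{j\ge0}(1-aq^j)$, and $\eta(\tau)=q^{1/24}(q;q)_\infty$. Define $$j_6(\tau)=\left(\frac{\eta(2\tau)\eta(3\tau)^3}{\eta(\tau)\eta(6\tau)^3}\right)^3-3=\frac1q+\sum_{n\ge0}\mathcal{J}_6(n)q^n.$$ *)

theory Defs
  imports "HOL-Computational_Algebra.Formal_Power_Series" "HOL-Computational_Algebra.Primes"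
begin

text \<open>Formal power series of the q-Pochhammer symbol (q^m;q^m)_infinity = prod_{j>=1} (1 - q^(m j)).
  Its n-th coefficient agrees with the one of the finite product over j = 1..n.\<close>
definition qpoch :: "nat \<Rightarrow> rat fps" where
  "qpoch m = Abs_fps (\<lambda>n. fps_nth (\<Prod>j\<in>{1..n}. (1 - fps_X ^ (m * j))) n)"

text \<open>P(q) = q * (j_6 + 3) = ((q^2;q^2)(q^3;q^3)^3 / ((q;q)(q^6;q^6)^3))^3 as a formal power series
  (the eta-quotient equals q^(-1) * P(q), since (2 + 9 - 1 - 18)/24 * 3 = -1).\<close>
definition j6P :: "rat fps" where
  "j6P = ((qpoch 2 * qpoch 3 ^ 3) / (qpoch 1 * qpoch 6 ^ 3)) ^ 3"

text \<open>Coefficient of q^m in j_6 = 1/q + sum_{n>=0} J_6(n) q^n; zero for m < -1.\<close>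
definition J6 :: "int \<Rightarrow> rat" where
  "J6 m = (if m < -1 then 0
           else fps_nth j6P (nat (m + 1)) - (if m = 0 then 3 else 0))"

end

(*
  Everything is computed modulo 2, i.e. in power series over bit. There squaring is the substitution
  q -> q^2, and a finite form of Jacobi's identity (from Cauchy's q-binomial theorem) gives
  (q;q)^3 = psi(q) = sum q^(n(n+1)/2). Hence c = q (j_6 + 3) satisfies
  c psi(q^3)^3 = psi(q). An involution on the representations 8e + 4 = x^2 + 3y^2 with x, y odd and
  positive yields psi(q) psi(q^3) = psi(q^4) + q psi(q^12), and combining the two identities gives
  J_6(24t + 3) = [8t + 1 is a square] modulo 2. Finally the argument of J_6 in the theorem is 3N with
  N = 1 (mod 8), and N contains the prime p_(k+1) to an odd power, so it is not a square.
*)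

theory Submission
  imports Defs "HOL-Library.Z2" "HOL-Computational_Algebra.Formal_Laurent_Series"
begin

section \<open>Truncation and dilation of power series\<close>

lemma fps_cutoff_mult_cutoff:
  "fps_cutoff n (fps_cutoff n f * fps_cutoff n g) = fps_cutoff n (f * g)"
  by (rule fps_ext) (simp add: fps_cutoff_left_mult_nth fps_cutoff_right_mult_nth)

lemma fps_cutoff_mult_cong:
  assumes "fps_cutoff n f = fps_cutoff n f'" "fps_cutoff n g = fps_cutoff n g'"
  shows "fps_cutoff n (f * g) = fps_cutoff n (f' * g')"
  by (metis assms fps_cutoff_mult_cutoff)

lemma fps_cutoff_power_cong:
  "fps_cutoff n f = fps_cutoff n g \<Longrightarrow> fps_cutoff n (f ^ k) = fps_cutoff n (g ^ k)"
  by (induction k) (simp_all add: fps_cutoff_mult_cong[of n f g])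

lemma fps_cutoff_sum_cong:
  "(\<And>i. i \<in> S \<Longrightarrow> fps_cutoff n (f i) = fps_cutoff n (g i)) \<Longrightarrow>
   fps_cutoff n (\<Sum>i\<in>S. f i) = fps_cutoff n (\<Sum>i\<in>S. g i)"
  by (simp add: fps_cutoff_eq_fps_cutoff_iff fps_sum_nth)

lemma fps_cutoff_prod_eq_1:
  "(\<And>i. i \<in> S \<Longrightarrow> fps_cutoff n (f i) = fps_cutoff n 1) \<Longrightarrow>
   fps_cutoff n (\<Prod>i\<in>S. f i) = fps_cutoff n 1"
proof (induction S rule: infinite_finite_induct)
  case (insert x F)
  then have "fps_cutoff n (f x * (\<Prod>i\<in>F. f i)) = fps_cutoff n (1 * 1)"
    by (intro fps_cutoff_mult_cong) auto
  with insert show ?case by simp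
qed simp_all

lemma fps_cutoff_X_power_mult: "n \<le> d \<Longrightarrow> fps_cutoff n (fps_X ^ d * f) = 0"
  by (rule fps_ext) (simp add: fps_X_power_mult_nth)

lemma fps_cutoff_prod_one_minus_X_power_mono:
  assumes "finite B" "A \<subseteq> B" "\<And>j. j \<in> B - A \<Longrightarrow> n \<le> d j"
  shows "fps_cutoff n (\<Prod>j\<in>B. 1 - fps_X ^ d j :: 'a::comm_ring_1 fps) = fps_cutoff n (\<Prod>j\<in>A. 1 - fps_X ^ d j)"
proof -
  have tail: "fps_cutoff n (\<Prod>j\<in>B - A. 1 - fps_X ^ d j :: 'a fps) = fps_cutoff n 1"
    using assms(3) by (intro fps_cutoff_prod_eq_1) (force simp: fps_eq_iff)
  have "(\<Prod>j\<in>B. 1 - fps_X ^ d j :: 'a fps) = (\<Prod>j\<in>A. 1 - fps_X ^ d j) * (\<Prod>j\<in>B - A. 1 - fps_X ^ d j)"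
    using assms(1,2) by (metis prod.subset_diff mult.commute)
  also have "fps_cutoff n \<dots> = fps_cutoff n ((\<Prod>j\<in>A. 1 - fps_X ^ d j) * 1)"
    by (rule fps_cutoff_mult_cong[OF refl tail])
  finally show ?thesis by simp
qed

lemma fps_compose_X_power_nth_mult [simp]: "k > 0 \<Longrightarrow> (f oo fps_X ^ k) $ (k * n) = f $ n"
  by (simp add: fps_nth_compose_X_power)

lemma fps_compose_X_power_compose_X_power:
  "a > 0 \<Longrightarrow> b > 0 \<Longrightarrow> (f oo fps_X ^ a) oo fps_X ^ b = (f oo fps_X ^ (a * b) :: 'a::idom fps)"
  by (simp add: fps_compose_assoc [symmetric] fps_X_power_compose mult.commute flip: power_mult)

section \<open>Euler products\<close>

definition euler_prod :: "nat \<Rightarrow> 'a::comm_ring_1 fps" where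
  "euler_prod m = Abs_fps (\<lambda>n. (\<Prod>j\<in>{1..n}. 1 - fps_X ^ (m * j)) $ n)"

lemma qpoch_eq_euler_prod: "qpoch m = euler_prod m"
  by (simp add: qpoch_def euler_prod_def)

lemma euler_prod_nth_0 [simp]: "euler_prod m $ 0 = 1"
  by (simp add: euler_prod_def)

lemma fps_cutoff_euler_prod:
  assumes "m > 0" "n \<le> M + 1"
  shows "fps_cutoff n (euler_prod m) = fps_cutoff n (\<Prod>j\<in>{1..M}. 1 - fps_X ^ (m * j) :: 'a::comm_ring_1 fps)"
  unfolding fps_cutoff_eq_fps_cutoff_iff
proof (intro allI impI)
  fix i assume "i < n"
  have "fps_cutoff (Suc i) (\<Prod>j\<in>{1..M}. 1 - fps_X ^ (m * j) :: 'a fps)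
      = fps_cutoff (Suc i) (\<Prod>j\<in>{1..i}. 1 - fps_X ^ (m * j))"
  proof (rule fps_cutoff_prod_one_minus_X_power_mono)
    show "{1..i} \<subseteq> {1..M}" using \<open>i < n\<close> assms(2) by auto
    show "Suc i \<le> m * j" if "j \<in> {1..M} - {1..i}" for j
    proof -
      have "Suc i \<le> j" "j \<le> m * j" using that assms(1) by auto
      then show ?thesis by linarith
    qed
  qed simp
  then show "euler_prod m $ i = (\<Prod>j\<in>{1..M}. 1 - fps_X ^ (m * j) :: 'a fps) $ i"
    by (simp add: euler_prod_def fps_cutoff_eq_fps_cutoff_iff)
qed

lemma euler_prod_nth:
  "m > 0 \<Longrightarrow> n \<le> M \<Longrightarrow>
   euler_prod m $ n = (\<Prod>j\<in>{1..M}. 1 - fps_X ^ (m * j) :: 'a::comm_ring_1 fps) $ n"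
  using fps_cutoff_euler_prod[of m "Suc n" M, where 'a='a] unfolding fps_cutoff_eq_fps_cutoff_iff by simp

lemma euler_prod_eq_compose:
  assumes "m > 0"
  shows "euler_prod m = (euler_prod 1 oo fps_X ^ m :: 'a::idom fps)"
proof (rule fps_ext)
  fix n
  have "euler_prod m $ n = (\<Prod>j\<in>{1..n}. 1 - fps_X ^ (m * j) :: 'a fps) $ n"
    by (simp add: euler_prod_def)
  also have "(\<Prod>j\<in>{1..n}. 1 - fps_X ^ (m * j) :: 'a fps) = (\<Prod>j\<in>{1..n}. 1 - fps_X ^ j) oo fps_X ^ m"
    using assms by (simp add: fps_compose_prod_distrib fps_compose_sub_distrib fps_X_power_compose
        flip: power_mult)
  also have "\<dots> $ n = (euler_prod 1 oo fps_X ^ m) $ n"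
    using euler_prod_nth[of 1 "n div m" n, where 'a='a, symmetric] by (simp add: fps_nth_compose_X_power)
  finally show "euler_prod m $ n = (euler_prod 1 oo fps_X ^ m :: 'a fps) $ n" .
qed

definition of_int_fps :: "int fps \<Rightarrow> 'a::comm_ring_1 fps" where
  "of_int_fps f = Abs_fps (\<lambda>n. of_int (f $ n))"

lemma of_int_fps_nth [simp]: "of_int_fps f $ n = of_int (f $ n)"
  by (simp add: of_int_fps_def)

lemma of_int_fps_mult: "of_int_fps (f * g) = of_int_fps f * of_int_fps g"
  by (rule fps_ext) (simp add: fps_mult_nth)

lemma of_int_fps_power: "of_int_fps (f ^ k) = of_int_fps f ^ k"
proof (induction k)
  case 0
  show ?case by (rule fps_ext) simp
qed (simp add: of_int_fps_mult)

lemma of_int_fps_euler_prod: "of_int_fps (euler_prod m) = euler_prod m"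
proof -
  have hom: "of_int_fps (\<Prod>j\<in>S. 1 - fps_X ^ d j) = (\<Prod>j\<in>S. 1 - fps_X ^ d j :: 'a fps)"
    for S and d :: "nat \<Rightarrow> nat"
  proof (induction S rule: infinite_finite_induct)
    case (insert x F)
    have "of_int_fps (1 - fps_X ^ d x) = (1 - fps_X ^ d x :: 'a fps)"
      by (rule fps_ext) simp
    with insert show ?case by (simp add: of_int_fps_mult)
  qed (simp_all add: fps_eq_iff)
  show ?thesis
    by (rule fps_ext) (simp add: euler_prod_def flip: hom)
qed

section \<open>Power series in characteristic 2\<close>

lemma sum_bit_eq_of_nat_card: "finite S \<Longrightarrow> (\<Sum>i\<in>S. f i :: bit) = of_nat (card {i\<in>S. f i = 1})"
proof -
  assume "finite S"
  have "(\<Sum>i\<in>S. f i) = (\<Sum>i\<in>{i\<in>S. f i = 1}. f i)"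
    using \<open>finite S\<close> by (intro sum.mono_neutral_right) auto
  then show ?thesis by simp
qed

lemma of_nat_card_involution_fixpoints:
  assumes "finite S" "\<And>x. x \<in> S \<Longrightarrow> g x \<in> S" "\<And>x. x \<in> S \<Longrightarrow> g (g x) = x"
  shows "(of_nat (card S) :: bit) = of_nat (card {x\<in>S. g x = x})"
  using assms
proof (induction "card S" arbitrary: S rule: less_induct)
  case less
  show ?case
  proof (cases "\<exists>a\<in>S. g a \<noteq> a")
    case False
    then have "{x\<in>S. g x = x} = S" by auto
    then show ?thesis by simp
  next
    case True
    then obtain a where a: "a \<in> S" "g a \<noteq> a" by blast
    define S' where "S' = S - {a, g a}"
    have card_S: "card S = card S' + 2"
      using less.prems a card_Diff_subset[of "{a, g a}" S] card_mono[of S "{a, g a}"]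
      by (auto simp: S'_def)
    have "(of_nat (card S') :: bit) = of_nat (card {x\<in>S'. g x = x})"
    proof (rule less.hyps)
      show "g x \<in> S'" if "x \<in> S'" for x
      proof -
        have "x \<in> S" "x \<noteq> a" "x \<noteq> g a" using that by (auto simp: S'_def)
        then have "g x \<in> S" "g x \<noteq> g a" "g x \<noteq> a"
          using less.prems(2,3) a(1) by metis+
        then show ?thesis by (simp add: S'_def)
      qed
    qed (use card_S less.prems in \<open>auto simp: S'_def\<close>)
    moreover have "{x\<in>S'. g x = x} = {x\<in>S. g x = x}"
      using a less.prems(3)[OF a(1)] by (auto simp: S'_def)
    ultimately show ?thesis by (simp add: card_S)
  qed
qed

(* The cross terms f_i f_(n-i) and f_(n-i) f_i cancel; what remains is f_(n/2)^2 = f_(n/2). *)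
lemma bit_fps_square: "(f :: bit fps) ^ 2 = f oo fps_X ^ 2"
proof (rule fps_ext)
  fix n
  define S where "S = {i\<in>{0..n}. f $ i = 1 \<and> f $ (n - i) = 1}"
  have "(f ^ 2) $ n = of_nat (card S)"
    by (simp add: power2_eq_square fps_mult_nth sum_bit_eq_of_nat_card S_def)
      (intro arg_cong[where f = "\<lambda>A. of_nat (card A)"]; auto)
  also have "\<dots> = of_nat (card {i\<in>S. n - i = i})"
    by (rule of_nat_card_involution_fixpoints) (auto simp: S_def mult.commute)
  also have "{i\<in>S. n - i = i} = (if even n \<and> f $ (n div 2) = 1 then {n div 2} else {})"
  proof (intro set_eqI iffI)
    fix i assume "i \<in> {i\<in>S. n - i = i}"
    then have "n = 2 * i" "f $ i = 1" by (auto simp: S_def)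
    then show "i \<in> (if even n \<and> f $ (n div 2) = 1 then {n div 2} else {})" by simp
  next
    fix i assume "i \<in> (if even n \<and> f $ (n div 2) = 1 then {n div 2} else {})"
    then have "n = 2 * i" "f $ i = 1" by (auto split: if_splits elim!: evenE)
    then show "i \<in> {i\<in>S. n - i = i}" by (simp add: S_def)
  qed
  also have "(of_nat (card \<dots>) :: bit) = (f oo fps_X ^ 2) $ n"
    by (cases "f $ (n div 2)") (auto simp: fps_nth_compose_X_power)
  finally show "(f ^ 2) $ n = (f oo fps_X ^ 2) $ n" .
qed

lemma bit_fps_uminus [simp]: "- (f :: bit fps) = f"
  by (rule fps_ext) simp

lemma bit_fps_diff: "f - g = f + (g :: bit fps)"
  by (simp add: diff_conv_add_uminus)

lemma bit_fps_power_4: "(f :: bit fps) ^ 4 = f oo fps_X ^ 4"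
proof -
  have "f ^ 4 = (f ^ 2) ^ 2" by (simp flip: power_mult)
  also have "\<dots> = (f oo fps_X ^ 2) oo fps_X ^ 2"
    by (simp only: bit_fps_square[of f] bit_fps_square[of "f oo fps_X ^ 2"])
  also have "\<dots> = f oo fps_X ^ 4" by (simp add: fps_compose_X_power_compose_X_power)
  finally show ?thesis .
qed

section \<open>Cauchy's q-binomial theorem\<close>

fun triangular :: "nat \<Rightarrow> nat" where
  "triangular 0 = 0"
| "triangular (Suc k) = triangular k + Suc k"

lemma two_times_triangular: "2 * triangular k = k * (k + 1)"
  by (induction k) auto

fun qbinomial :: "'a::comm_ring_1 \<Rightarrow> nat \<Rightarrow> nat \<Rightarrow> 'a" where
  "qbinomial Q 0 k = (if k = 0 then 1 else 0)"
| "qbinomial Q (Suc N) 0 = 1"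
| "qbinomial Q (Suc N) (Suc k) = qbinomial Q N k + Q ^ Suc k * qbinomial Q N (Suc k)"

lemma qbinomial_0_right [simp]: "qbinomial Q N 0 = 1"
  by (cases N) auto

lemma qbinomial_eq_0: "N < k \<Longrightarrow> qbinomial Q N k = 0"
  by (induction Q N k rule: qbinomial.induct) auto

lemma prod_add_mult_power_Suc:
  "(\<Prod>i\<in>{1..Suc N}. x + y * Q ^ i) = (x + y * Q) * (\<Prod>i\<in>{1..N}. x + (y * Q) * Q ^ i :: 'a::comm_ring_1)"
proof -
  have "(\<Prod>i\<in>{1..Suc N}. x + y * Q ^ i) = (x + y * Q ^ 1) * (\<Prod>i\<in>{Suc 1..Suc N}. x + y * Q ^ i)"
    by (rule prod.atLeast_Suc_atMost) simp
  also have "(\<Prod>i\<in>{Suc 1..Suc N}. x + y * Q ^ i) = (\<Prod>i\<in>{1..N}. x + (y * Q) * Q ^ i)"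
    by (simp only: prod.shift_bounds_cl_Suc_ivl power_Suc mult_ac)
  finally show ?thesis by simp
qed

theorem q_binomial_theorem:
  "(\<Prod>i\<in>{1..N}. x + y * Q ^ i) = (\<Sum>k\<in>{0..N}. qbinomial Q N k * Q ^ triangular k * y ^ k * x ^ (N - k))"
proof -
  define T where "T y N k = qbinomial Q N k * Q ^ triangular k * y ^ k * x ^ (N - k)" for y N k
  have step: "T y (Suc N) (Suc k) = y * Q * T (y * Q) N k + x * T (y * Q) N (Suc k)" for y N k
  proof (cases "k < N")
    case True
    then have "x ^ (N - k) = x * x ^ (N - Suc k)"
      by (metis Suc_diff_Suc power_Suc)
    then show ?thesis by (simp add: T_def algebra_simps power_add power_mult_distrib)
  next
    case False
    then show ?thesis by (simp add: T_def qbinomial_eq_0 algebra_simps power_add power_mult_distrib)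
  qed
  have "(\<Prod>i\<in>{1..N}. x + y * Q ^ i) = (\<Sum>k\<in>{0..N}. T y N k)" for y
  proof (induction N arbitrary: y)
    case 0
    show ?case by (simp add: T_def)
  next
    case (Suc N)
    let ?f = "T (y * Q) N"
    have top: "?f (Suc N) = 0" by (simp add: T_def qbinomial_eq_0)
    have "(\<Sum>k\<in>{0..Suc N}. T y (Suc N) k) = T y (Suc N) 0 + (\<Sum>k\<in>{0..N}. T y (Suc N) (Suc k))"
      by (simp only: sum.atLeast0_atMost_Suc_shift comp_def)
    also have "\<dots> = x * (?f 0 + (\<Sum>k\<in>{0..N}. ?f (Suc k))) + y * Q * (\<Sum>k\<in>{0..N}. ?f k)"
      by (simp add: step sum.distrib sum_distrib_left algebra_simps) (simp add: T_def)
    also have "?f 0 + (\<Sum>k\<in>{0..N}. ?f (Suc k)) = (\<Sum>k\<in>{0..N}. ?f k)"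
    proof -
      have "(\<Sum>k\<in>{0..Suc N}. ?f k) = ?f 0 + (\<Sum>k\<in>{0..N}. ?f (Suc k))"
        by (simp only: sum.atLeast0_atMost_Suc_shift comp_def)
      moreover have "(\<Sum>k\<in>{0..Suc N}. ?f k) = (\<Sum>k\<in>{0..N}. ?f k)"
        using top by (simp add: sum.atLeast0_atMost_Suc)
      ultimately show ?thesis by simp
    qed
    finally have "(\<Sum>k\<in>{0..Suc N}. T y (Suc N) k) = (x + y * Q) * (\<Sum>k\<in>{0..N}. ?f k)"
      by (simp add: algebra_simps)
    then show ?case by (simp only: prod_add_mult_power_Suc Suc.IH)
  qed
  then show ?thesis by (simp add: T_def)
qed

definition qfact :: "'a::comm_ring_1 \<Rightarrow> nat \<Rightarrow> 'a" where
  "qfact Q m = (\<Prod>i\<in>{1..m}. 1 - Q ^ i)"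

lemma qfact_0 [simp]: "qfact Q 0 = 1"
  by (simp add: qfact_def)

lemma qfact_Suc: "qfact Q (Suc m) = qfact Q m * (1 - Q ^ Suc m)"
  by (simp add: qfact_def)

lemma qbinomial_qfact: "k \<le> N \<Longrightarrow> qbinomial Q N k * qfact Q k * qfact Q (N - k) = qfact Q N"
proof (induction N arbitrary: k)
  case 0
  then show ?case by simp
next
  case (Suc N)
  show ?case
  proof (cases k)
    case 0
    then show ?thesis by simp
  next
    case (Suc k')
    with Suc.prems have k': "k' \<le> N" by simp
    have A: "qbinomial Q N k' * qfact Q (Suc k') * qfact Q (N - k') = qfact Q N * (1 - Q ^ Suc k')"
      using Suc.IH[OF k'] by (simp add: qfact_Suc algebra_simps)
    have B: "Q ^ Suc k' * qbinomial Q N (Suc k') * qfact Q (Suc k') * qfact Q (N - k') = qfact Q N * (Q ^ Suc k' - Q ^ Suc N)"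
    proof (cases "Suc k' \<le> N")
      case True
      have "N - k' = Suc (N - Suc k')" using True by simp
      then have qN: "qfact Q (N - k') = qfact Q (N - Suc k') * (1 - Q ^ (N - k'))" by (simp add: qfact_Suc)
      have "Q ^ Suc k' * qbinomial Q N (Suc k') * qfact Q (Suc k') * qfact Q (N - k')
          = Q ^ Suc k' * (qbinomial Q N (Suc k') * qfact Q (Suc k') * qfact Q (N - Suc k')) * (1 - Q ^ (N - k'))"
        by (simp add: qN algebra_simps)
      also have "\<dots> = Q ^ Suc k' * qfact Q N * (1 - Q ^ (N - k'))" using Suc.IH[OF True] by simp
      also have "\<dots> = qfact Q N * (Q ^ Suc k' - Q ^ Suc k' * Q ^ (N - k'))" by (simp add: algebra_simps)
      also have "Q ^ Suc k' * Q ^ (N - k') = Q ^ Suc N"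
        using k' by (simp add: mult.assoc flip: power_add)
      finally show ?thesis .
    next
      case False
      then have qz: "qbinomial Q N (Suc k') = 0" by (intro qbinomial_eq_0) auto
      have "k' = N" using False k' by simp
      then show ?thesis using qz by simp
    qed
    have "qbinomial Q (Suc N) k * qfact Q k * qfact Q (Suc N - k)
        = qbinomial Q N k' * qfact Q (Suc k') * qfact Q (N - k')
          + Q ^ Suc k' * qbinomial Q N (Suc k') * qfact Q (Suc k') * qfact Q (N - k')"
      using Suc by (simp add: algebra_simps)
    also have "\<dots> = qfact Q N * (1 - Q ^ Suc N)" by (simp only: A B) (simp add: algebra_simps)
    also have "\<dots> = qfact Q (Suc N)" by (simp add: qfact_Suc)
    finally show ?thesis .
  qed
qed

lemma qfact_X_power: "qfact (fps_X ^ d) M = (\<Prod>i\<in>{1..M}. 1 - fps_X ^ (d * i))"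
  by (simp add: qfact_def power_mult)

lemma fps_cutoff_qfact_X_power_mono:
  "M \<le> M' \<Longrightarrow> n \<le> d * (M + 1) \<Longrightarrow>
   fps_cutoff n (qfact (fps_X ^ d) M' :: 'a::comm_ring_1 fps) = fps_cutoff n (qfact (fps_X ^ d) M)"
  unfolding qfact_X_power
proof (rule fps_cutoff_prod_one_minus_X_power_mono)
  fix j assume "n \<le> d * (M + 1)" "j \<in> {1..M'} - {1..M}"
  then have "d * (M + 1) \<le> d * j" by (intro mult_le_mono2) auto
  with \<open>n \<le> d * (M + 1)\<close> show "n \<le> d * j" by linarith
qed auto

lemma qfact_X_power_nth_0: "d > 0 \<Longrightarrow> qfact (fps_X ^ d) m $ 0 = (1 :: 'a::comm_ring_1)"
  by (induction m) (simp_all add: qfact_Suc)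

lemma fps_cutoff_qbinomial_qfact:
  fixes d :: nat
  assumes "d > 0" "k \<le> N" "n \<le> d * (k + 1)" "n \<le> d * (N - k + 1)"
  shows "fps_cutoff n (qbinomial (fps_X ^ d) N k * qfact (fps_X ^ d) N :: 'a::field fps) = fps_cutoff n 1"
proof -
  let ?Q = "fps_X ^ d :: 'a fps"
  let ?b = "qbinomial ?Q N k"
  have qfact_unit: "qfact ?Q k * inverse (qfact ?Q k) = 1"
    by (rule inverse_mult_eq_1') (simp add: qfact_X_power_nth_0 \<open>d > 0\<close>)
  have "fps_cutoff n (?b * qfact ?Q N) = fps_cutoff n (?b * qfact ?Q (N - k))"
    by (rule fps_cutoff_mult_cong[OF refl fps_cutoff_qfact_X_power_mono]) (use assms in auto)
  also have "?b * qfact ?Q (N - k) = ?b * qfact ?Q k * qfact ?Q (N - k) * inverse (qfact ?Q k)"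
    using qfact_unit by (simp add: algebra_simps)
  also have "\<dots> = qfact ?Q N * inverse (qfact ?Q k)"
    by (simp only: qbinomial_qfact[OF assms(2)])
  also have "fps_cutoff n \<dots> = fps_cutoff n (qfact ?Q k * inverse (qfact ?Q k))"
    by (rule fps_cutoff_mult_cong[OF fps_cutoff_qfact_X_power_mono refl]) (use assms in auto)
  finally show ?thesis by (simp only: qfact_unit)
qed

section \<open>A finite form of Jacobi's identity\<close>

lemma prod_odd_mult_prod_double:
  fixes M :: nat
  shows "(\<Prod>j\<in>{j\<in>{1..2 * M}. odd j}. f j) * (\<Prod>i\<in>{1..M}. f (2 * i))
       = (\<Prod>j\<in>{1..2 * M}. (f j :: 'a::comm_monoid_mult))"
proof -
  have "(\<Prod>j\<in>{1..2 * M}. f j) = (\<Prod>j\<in>{j\<in>{1..2 * M}. odd j} \<union> (\<lambda>i. 2 * i) ` {1..M}. f j)"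
    by (rule prod.cong) (auto elim!: evenE)
  also have "\<dots> = (\<Prod>j\<in>{j\<in>{1..2 * M}. odd j}. f j) * (\<Prod>j\<in>(\<lambda>i. 2 * i) ` {1..M}. f j)"
    by (rule prod.union_disjoint) auto
  also have "(\<Prod>j\<in>(\<lambda>i. 2 * i) ` {1..M}. f j) = (\<Prod>i\<in>{1..M}. f (2 * i))"
    by (rule prod.reindex_cong[of "\<lambda>i. 2 * i"]) (auto simp: inj_on_def)
  finally show ?thesis by simp
qed

lemma prod_one_minus_X_power_compose:
  "d > 0 \<Longrightarrow> (\<Prod>j\<in>S. 1 - fps_X ^ j) oo fps_X ^ d = (\<Prod>j\<in>S. 1 - fps_X ^ (d * j) :: 'a::idom fps)"
  by (simp add: fps_compose_prod_distrib fps_compose_sub_distrib fps_X_power_compose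
      flip: power_mult)

lemma bij_betw_jacobi_odd_exponents:
  fixes n :: nat
  defines "h \<equiv> \<lambda>i. if i \<le> n then 4 * (n - i) + 1 else 4 * (i - n) - 1"
  shows "bij_betw h {1..2 * n} {j\<in>{1..4 * n}. odd j}"
proof (rule bij_betw_byWitness[where f' = "\<lambda>j. if j mod 4 = 1 then n - j div 4 else n + (j + 1) div 4"])
  show "\<forall>i\<in>{1..2 * n}. (if h i mod 4 = 1 then n - h i div 4 else n + (h i + 1) div 4) = i"
  proof
    fix i assume i: "i \<in> {1..2 * n}"
    show "(if h i mod 4 = 1 then n - h i div 4 else n + (h i + 1) div 4) = i"
    proof (cases "i \<le> n")
      case True
      then have "h i mod 4 = 1" "h i div 4 = n - i" by (simp_all add: h_def)
      then show ?thesis using True by simp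
    next
      case False
      then have "h i = 4 * (i - n - 1) + 3" by (simp add: h_def)
      then have "h i mod 4 = 3" "(h i + 1) div 4 = i - n" using False by simp_all
      then show ?thesis using False by simp
    qed
  qed
  show "\<forall>j\<in>{j\<in>{1..4 * n}. odd j}. h (if j mod 4 = 1 then n - j div 4 else n + (j + 1) div 4) = j"
  proof
    fix j assume j: "j \<in> {j\<in>{1..4 * n}. odd j}"
    show "h (if j mod 4 = 1 then n - j div 4 else n + (j + 1) div 4) = j"
    proof (cases "j mod 4 = 1")
      case True
      then have "j = 4 * (j div 4) + 1" by presburger
      moreover have "j div 4 \<le> n" using j by auto
      ultimately show ?thesis using True by (simp add: h_def)
    next
      case False
      moreover have "odd j" using j by simp
      ultimately have "j mod 4 = 3" by presburger
      then have "j + 1 = 4 * ((j + 1) div 4)" "(j + 1) div 4 > 0" by presburger+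
      then show ?thesis using False by (simp add: h_def)
    qed
  qed
  show "h ` {1..2 * n} \<subseteq> {j\<in>{1..4 * n}. odd j}"
    by (auto simp: h_def)
  show "(\<lambda>j. if j mod 4 = 1 then n - j div 4 else n + (j + 1) div 4) ` {j\<in>{1..4 * n}. odd j} \<subseteq> {1..2 * n}"
    by auto presburger+
qed

lemma sum_jacobi_shift_exponents: "(\<Sum>i\<in>{1..2 * n}. if i \<le> n then 4 * i else 4 * n + 1) = 6 * n * n + 3 * (n::nat)"
proof -
  have gauss4: "(\<Sum>i\<in>{1..m}. 4 * i) = 2 * m * (m + 1)" for m :: nat
    by (induction m) auto
  have "(\<Sum>i\<in>{1..n + n}. if i \<le> n then 4 * i else 4 * n + 1)
      = (\<Sum>i\<in>{1..n}. 4 * i) + (\<Sum>i\<in>{n + 1..n + n}. 4 * n + 1)"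
    by (simp add: sum.ub_add_nat)
  also have "\<dots> = 2 * n * (n + 1) + n * (4 * n + 1)"
    by (simp only: gauss4) simp
  also have "\<dots> = 6 * n * n + 3 * n"
    by (simp add: algebra_simps)
  finally show ?thesis by (simp add: mult_2)
qed

lemma prod_X_power_add_X_power:
  fixes n :: nat
  shows "(\<Prod>i\<in>{1..2 * n}. fps_X ^ (4 * n + 1) + fps_X ^ (4 * i) :: 'a::comm_ring_1 fps)
       = fps_X ^ (6 * n * n + 3 * n) * (\<Prod>j\<in>{j\<in>{1..4 * n}. odd j}. 1 + fps_X ^ j)"
proof -
  define h where "h = (\<lambda>i. if i \<le> n then 4 * (n - i) + 1 else 4 * (i - n) - 1)"
  define e where "e = (\<lambda>i::nat. if i \<le> n then 4 * i else 4 * n + 1)"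
  have factor: "fps_X ^ (4 * n + 1) + fps_X ^ (4 * i) = fps_X ^ e i * (1 + fps_X ^ h i :: 'a fps)"
    if "i \<in> {1..2 * n}" for i
  proof (cases "i \<le> n")
    case True
    then have "4 * n + 1 = e i + h i" "4 * i = e i" by (simp_all add: e_def h_def)
    then show ?thesis by (simp add: power_add algebra_simps)
  next
    case False
    then have "4 * i = e i + h i" "4 * n + 1 = e i" using that by (simp_all add: e_def h_def)
    then show ?thesis by (simp add: power_add algebra_simps)
  qed
  have "(\<Prod>i\<in>{1..2 * n}. fps_X ^ (4 * n + 1) + fps_X ^ (4 * i) :: 'a fps)
      = (\<Prod>i\<in>{1..2 * n}. fps_X ^ e i * (1 + fps_X ^ h i))"
    by (rule prod.cong[OF refl factor])
  also have "\<dots> = (\<Prod>i\<in>{1..2 * n}. fps_X ^ e i) * (\<Prod>i\<in>{1..2 * n}. 1 + fps_X ^ h i)"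
    by (rule prod.distrib)
  also have "(\<Prod>i\<in>{1..2 * n}. fps_X ^ e i :: 'a fps) = fps_X ^ (6 * n * n + 3 * n)"
    by (simp only: power_sum [symmetric] e_def sum_jacobi_shift_exponents)
  also have "(\<Prod>i\<in>{1..2 * n}. 1 + fps_X ^ h i :: 'a fps) = (\<Prod>j\<in>{j\<in>{1..4 * n}. odd j}. 1 + fps_X ^ j)"
    unfolding h_def by (rule prod.reindex_bij_betw[OF bij_betw_jacobi_odd_exponents])
  finally show ?thesis .
qed

definition jacobi_exp :: "nat \<Rightarrow> nat \<Rightarrow> nat" where
  "jacobi_exp n k = nat (2 * (int k - int n) ^ 2 + (int k - int n))"

lemma abs_le_two_power2_add_self: "\<bar>d\<bar> \<le> 2 * d ^ 2 + (d :: int)"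
proof (cases "d \<ge> 0")
  case False
  then have "0 \<le> d * (d + 1)" by (intro mult_nonpos_nonpos) auto
  with False show ?thesis by (simp add: power2_eq_square algebra_simps)
qed (simp add: power2_eq_square)

lemma int_jacobi_exp: "int (jacobi_exp n k) = 2 * (int k - int n) ^ 2 + (int k - int n)"
  using abs_le_two_power2_add_self[of "int k - int n"] by (simp add: jacobi_exp_def)

lemma jacobi_exp_square: "(4 * (int k - int n) + 1) ^ 2 = 8 * int (jacobi_exp n k) + 1"
  by (simp add: int_jacobi_exp power2_eq_square algebra_simps)

lemma q_binomial_exponent:
  assumes "k \<le> 2 * n"
  shows "4 * triangular k + (4 * n + 1) * (2 * n - k) = 6 * n * n + 3 * n + jacobi_exp n k"
proof -
  have "int (4 * triangular k) = 2 * int k * (int k + 1)"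
    using arg_cong[OF two_times_triangular[of k], of int] by (simp add: algebra_simps)
  moreover have "int (2 * n - k) = 2 * int n - int k"
    using assms by simp
  then have "int ((4 * n + 1) * (2 * n - k)) = (4 * int n + 1) * (2 * int n - int k)"
    unfolding of_nat_mult by simp
  ultimately have "int (4 * triangular k + (4 * n + 1) * (2 * n - k)) = int (6 * n * n + 3 * n + jacobi_exp n k)"
    by (simp add: int_jacobi_exp power2_eq_square algebra_simps)
  then show ?thesis by (simp only: of_nat_eq_iff)
qed

(* Cauchy's theorem with Q = q^4, x = q^(4n+1), y = 1, after q^(6n^2+3n) is factored out of the product. *)
theorem finite_jacobi_identity:
  fixes n :: nat
  shows "(\<Prod>j\<in>{j\<in>{1..4 * n}. odd j}. 1 + fps_X ^ j :: 'a::idom fps)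
       = (\<Sum>k\<in>{0..2 * n}. qbinomial (fps_X ^ 4) (2 * n) k * fps_X ^ jacobi_exp n k)"
proof -
  let ?c = "6 * n * n + 3 * n"
  let ?Q = "fps_X ^ 4 :: 'a fps"
  have "fps_X ^ ?c * (\<Prod>j\<in>{j\<in>{1..4 * n}. odd j}. 1 + fps_X ^ j :: 'a fps)
      = (\<Prod>i\<in>{1..2 * n}. fps_X ^ (4 * n + 1) + 1 * ?Q ^ i)"
    by (simp only: prod_X_power_add_X_power mult_1 power_mult [symmetric])
  also have "\<dots> = (\<Sum>k\<in>{0..2 * n}. qbinomial ?Q (2 * n) k * ?Q ^ triangular k * 1 ^ k
                                      * (fps_X ^ (4 * n + 1)) ^ (2 * n - k))"
    by (rule q_binomial_theorem)
  also have "\<dots> = (\<Sum>k\<in>{0..2 * n}. fps_X ^ ?c * (qbinomial ?Q (2 * n) k * fps_X ^ jacobi_exp n k))"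
  proof (rule sum.cong[OF refl])
    fix k assume "k \<in> {0..2 * n}"
    then have "?Q ^ triangular k * (fps_X ^ (4 * n + 1)) ^ (2 * n - k) = fps_X ^ ?c * fps_X ^ jacobi_exp n k"
      by (simp only: power_mult [symmetric] power_add [symmetric] q_binomial_exponent atLeastAtMost_iff)
    then show "qbinomial ?Q (2 * n) k * ?Q ^ triangular k * 1 ^ k * (fps_X ^ (4 * n + 1)) ^ (2 * n - k)
        = fps_X ^ ?c * (qbinomial ?Q (2 * n) k * fps_X ^ jacobi_exp n k)"
      by (simp add: algebra_simps)
  qed
  finally show ?thesis
    by (simp add: sum_distrib_left [symmetric])
qed

(* 8e + 1 is a square iff e is a triangular number, so this is Ramanujan's psi(q) = sum q^(n(n+1)/2). *)
definition psi :: "'a::comm_ring_1 fps" where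
  "psi = Abs_fps (\<lambda>e. of_bool (\<exists>x::int. x ^ 2 = 8 * int e + 1))"

lemma psi_nth: "psi $ e = of_bool (\<exists>x::int. x ^ 2 = 8 * int e + 1)"
  by (simp add: psi_def)

lemma psi_nth_0 [simp]: "psi $ 0 = 1"
  by (auto simp: psi_nth intro: exI[of _ 1])

lemma card_jacobi_exp_fiber:
  assumes "t \<le> n"
  shows "card {k\<in>{0..2 * n}. jacobi_exp n k = t} = of_bool (\<exists>x::int. x ^ 2 = 8 * int t + 1)"
proof (cases "\<exists>x::int. x ^ 2 = 8 * int t + 1")
  case True
  then obtain x :: int where x: "x ^ 2 = 8 * int t + 1" by blast
  then have "odd (x ^ 2)" by simp
  then have "odd x" by simp
  then have "\<exists>d. 4 * d + 1 = x \<or> 4 * d + 1 = - x" by presburger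
  then obtain d :: int where "4 * d + 1 = x \<or> 4 * d + 1 = - x" by blast
  then have d: "(4 * d + 1) ^ 2 = 8 * int t + 1" using x by auto
  then have "2 * d ^ 2 + d = int t" by (simp add: power2_eq_square algebra_simps)
  then have "\<bar>d\<bar> \<le> int n" using abs_le_two_power2_add_self[of d] assms by linarith
  have "{k\<in>{0..2 * n}. jacobi_exp n k = t} = {nat (int n + d)}"
  proof (intro set_eqI iffI)
    fix k assume "k \<in> {k\<in>{0..2 * n}. jacobi_exp n k = t}"
    then have "(4 * (int k - int n) + 1) ^ 2 = (4 * d + 1) ^ 2"
      by (simp only: jacobi_exp_square d mem_Collect_eq)
    then have "4 * (int k - int n) + 1 = 4 * d + 1 \<or> 4 * (int k - int n) + 1 = - (4 * d + 1)"
      by (simp add: power2_eq_iff)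
    then have "int k - int n = d" by presburger
    then show "k \<in> {nat (int n + d)}" by auto
  next
    fix k assume "k \<in> {nat (int n + d)}"
    then have "int k - int n = d" "k \<le> 2 * n" using \<open>\<bar>d\<bar> \<le> int n\<close> by auto
    then show "k \<in> {k\<in>{0..2 * n}. jacobi_exp n k = t}"
      using jacobi_exp_square[of k n] d by simp
  qed
  then show ?thesis using True by simp
next
  case False
  then have "{k\<in>{0..2 * n}. jacobi_exp n k = t} = {}"
    using jacobi_exp_square by blast
  then show ?thesis using False by simp
qed

lemma fps_cutoff_sum_X_power_jacobi_exp:
  assumes "E \<le> n"
  shows "fps_cutoff (Suc E) (\<Sum>k\<in>{0..2 * n}. fps_X ^ jacobi_exp n k) = fps_cutoff (Suc E) (psi :: 'a::comm_ring_1 fps)"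
  unfolding fps_cutoff_eq_fps_cutoff_iff
proof (intro allI impI)
  fix t assume "t < Suc E"
  have "(\<Sum>k\<in>{0..2 * n}. fps_X ^ jacobi_exp n k :: 'a fps) $ t = of_nat (card {k\<in>{0..2 * n}. jacobi_exp n k = t})"
    unfolding fps_sum_nth fps_X_power_nth
    by (subst sum.inter_filter [symmetric]) (simp_all add: eq_commute)
  also have "\<dots> = psi $ t"
    using card_jacobi_exp_fiber[of t n] \<open>t < Suc E\<close> assms by (simp add: psi_nth)
  finally show "(\<Sum>k\<in>{0..2 * n}. fps_X ^ jacobi_exp n k :: 'a fps) $ t = psi $ t" .
qed

lemma fps_cutoff_jacobi_prod_qfact:
  assumes "2 * E \<le> n"
  shows "fps_cutoff (Suc E) ((\<Prod>j\<in>{j\<in>{1..4 * n}. odd j}. 1 + fps_X ^ j) * qfact (fps_X ^ 4) (2 * n))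
       = fps_cutoff (Suc E) (psi :: 'a::field fps)"
proof -
  let ?Q = "fps_X ^ 4 :: 'a fps"
  have "(\<Prod>j\<in>{j\<in>{1..4 * n}. odd j}. 1 + fps_X ^ j) * qfact ?Q (2 * n)
      = (\<Sum>k\<in>{0..2 * n}. fps_X ^ jacobi_exp n k * (qbinomial ?Q (2 * n) k * qfact ?Q (2 * n)))"
    by (simp only: finite_jacobi_identity sum_distrib_right) (simp add: algebra_simps)
  also have "fps_cutoff (Suc E) \<dots> = fps_cutoff (Suc E) (\<Sum>k\<in>{0..2 * n}. fps_X ^ jacobi_exp n k * 1)"
  proof (rule fps_cutoff_sum_cong)
    fix k assume k: "k \<in> {0..2 * n}"
    show "fps_cutoff (Suc E) (fps_X ^ jacobi_exp n k * (qbinomial ?Q (2 * n) k * qfact ?Q (2 * n)))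
        = fps_cutoff (Suc E) (fps_X ^ jacobi_exp n k * 1)"
    proof (cases "Suc E \<le> jacobi_exp n k")
      case True
      then show ?thesis by (simp only: fps_cutoff_X_power_mult)
    next
      case False
      then have "\<bar>int k - int n\<bar> \<le> int E"
        using abs_le_two_power2_add_self[of "int k - int n"] int_jacobi_exp[of n k] by linarith
      then have "Suc E \<le> 4 * (k + 1)" "Suc E \<le> 4 * (2 * n - k + 1)" using assms k by auto
      then show ?thesis
        using k by (intro fps_cutoff_mult_cong[OF refl] fps_cutoff_qbinomial_qfact) auto
    qed
  qed
  also have "\<dots> = fps_cutoff (Suc E) psi"
    using fps_cutoff_sum_X_power_jacobi_exp[of E n] assms by simp
  finally show ?thesis .
qed

lemma odd_prod_mult_qfact_bit:
  fixes n :: nat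
  defines "P \<equiv> \<lambda>M. \<Prod>j\<in>{1..M}. 1 - fps_X ^ j :: bit fps"
  shows "(\<Prod>j\<in>{j\<in>{1..4 * n}. odd j}. 1 + fps_X ^ j) * qfact (fps_X ^ 4) (2 * n) = P (4 * n) * P (2 * n) ^ 2"
proof -
  have "(\<Prod>j\<in>{j\<in>{1..4 * n}. odd j}. 1 + fps_X ^ j :: bit fps)
      = (\<Prod>j\<in>{j\<in>{1..2 * (2 * n)}. odd j}. 1 - fps_X ^ j)"
    by (simp add: bit_fps_diff)
  moreover have "P (2 * n) oo fps_X ^ 2 = (\<Prod>i\<in>{1..2 * n}. 1 - fps_X ^ (2 * i))"
    by (simp add: P_def prod_one_minus_X_power_compose)
  ultimately have "(\<Prod>j\<in>{j\<in>{1..4 * n}. odd j}. 1 + fps_X ^ j) * (P (2 * n) oo fps_X ^ 2) = P (4 * n)"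
    using prod_odd_mult_prod_double[of "\<lambda>j. 1 - fps_X ^ j :: bit fps" "2 * n"] by (simp add: P_def)
  moreover have "qfact (fps_X ^ 4) (2 * n) = P (2 * n) oo fps_X ^ 4"
    by (simp add: qfact_X_power P_def prod_one_minus_X_power_compose)
  moreover have "\<dots> = P (2 * n) ^ 2 * P (2 * n) ^ 2"
    by (simp add: bit_fps_power_4 [symmetric] flip: power_add)
  ultimately show ?thesis
    by (simp only: bit_fps_square[of "P (2 * n)"] mult.assoc [symmetric])
qed

theorem euler_prod_cube_bit: "(euler_prod 1 :: bit fps) ^ 3 = psi"
proof (rule fps_ext)
  fix E :: nat
  define n where "n = 2 * E"
  define P where "P M = (\<Prod>j\<in>{1..M}. 1 - fps_X ^ j :: bit fps)" for M
  have cutoff_P: "fps_cutoff (Suc E) (euler_prod 1) = fps_cutoff (Suc E) (P M)" if "E \<le> M" for M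
    using fps_cutoff_euler_prod[of 1 "Suc E" M, where 'a = bit] that by (simp add: P_def)
  have "fps_cutoff (Suc E) (euler_prod 1 ^ 3 :: bit fps) = fps_cutoff (Suc E) (euler_prod 1 * euler_prod 1 ^ 2)"
    by (simp add: numeral_3_eq_3 power2_eq_square)
  also have "\<dots> = fps_cutoff (Suc E) (P (4 * n) * P (2 * n) ^ 2)"
    by (intro fps_cutoff_mult_cong fps_cutoff_power_cong cutoff_P) (simp_all add: n_def)
  also have "\<dots> = fps_cutoff (Suc E) ((\<Prod>j\<in>{j\<in>{1..4 * n}. odd j}. 1 + fps_X ^ j) * qfact (fps_X ^ 4) (2 * n))"
    by (simp only: odd_prod_mult_qfact_bit P_def)
  also have "\<dots> = fps_cutoff (Suc E) psi"
    by (rule fps_cutoff_jacobi_prod_qfact) (simp add: n_def)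
  finally show "(euler_prod 1 ^ 3 :: bit fps) $ E = psi $ E"
    unfolding fps_cutoff_eq_fps_cutoff_iff by simp
qed

section \<open>The representations 8e + 4 = x^2 + 3y^2 with x, y odd\<close>

lemma odd_square_eq_8_mult_add_1: "odd (x::int) \<Longrightarrow> \<exists>a. x ^ 2 = 8 * a + 1"
proof -
  assume "odd x"
  then obtain y where y: "x = 2 * y + 1" by (auto elim: oddE)
  have "even (y * (y + 1))" by simp
  then obtain b where b: "y * (y + 1) = 2 * b" by (blast elim: evenE)
  have "x ^ 2 = 4 * (y * (y + 1)) + 1" by (simp add: y power2_eq_square algebra_simps)
  also have "\<dots> = 8 * b + 1" by (simp add: b)
  finally show ?thesis by blast
qed


(*
  Multiplication of x + y sqrt(-3) by the sixth root of unity (1 -+ sqrt(-3))/2, with the sign chosen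
  so that both new coordinates are odd, followed by taking absolute values. It preserves x^2 + 3y^2
  and is an involution on positive odd pairs whose fixed points are those with x = y or x = 3y.
*)
definition twist :: "int \<times> int \<Rightarrow> int \<times> int" where
  "twist = (\<lambda>(x, y). if (x - y) mod 4 = 0 then (\<bar>x - 3 * y\<bar> div 2, (x + y) div 2)
                       else ((x + 3 * y) div 2, \<bar>x - y\<bar> div 2))"

lemma twist_eq_if_4_dvd_diff:
  "(x - y) mod 4 = 0 \<Longrightarrow> 2 * s = x - 3 * y \<Longrightarrow> 2 * t = x + y \<Longrightarrow> twist (x, y) = (\<bar>s\<bar>, t)"
proof -
  assume a: "(x - y) mod 4 = 0" "2 * s = x - 3 * y" "2 * t = x + y"
  have "\<bar>x - 3 * y\<bar> div 2 = \<bar>s\<bar>" using a(2)[symmetric] by (simp add: abs_mult)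
  moreover have "(x + y) div 2 = t" using a(3)[symmetric] by simp
  ultimately show ?thesis using a(1) by (simp add: twist_def)
qed

lemma twist_eq_if_not_4_dvd_diff:
  "(x - y) mod 4 \<noteq> 0 \<Longrightarrow> 2 * s = x + 3 * y \<Longrightarrow> 2 * t = x - y \<Longrightarrow> twist (x, y) = (s, \<bar>t\<bar>)"
proof -
  assume a: "(x - y) mod 4 \<noteq> 0" "2 * s = x + 3 * y" "2 * t = x - y"
  have "\<bar>x - y\<bar> div 2 = \<bar>t\<bar>" using a(3)[symmetric] by (simp add: abs_mult)
  moreover have "(x + 3 * y) div 2 = s" using a(2)[symmetric] by simp
  ultimately show ?thesis using a(1) by (simp add: twist_def)
qed

lemma twist_props_if_4_dvd_diff:
  fixes x y :: int
  assumes xy: "odd x" "odd y" "x > 0" "y > 0" and A: "(x - y) mod 4 = 0"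
  shows "fst (twist (x, y)) > 0 \<and> snd (twist (x, y)) > 0 \<and> odd (fst (twist (x, y))) \<and> odd (snd (twist (x, y)))
         \<and> twist (twist (x, y)) = (x, y) \<and> (twist (x, y) = (x, y) \<longleftrightarrow> x = y \<or> x = 3 * y)"
proof -
  have "even (x - 3 * y)" "even (x + y)" using xy(1,2) by presburger+
  then obtain s t where s: "x - 3 * y = 2 * s" and t: "x + y = 2 * t" by (blast elim: evenE)
  have g: "twist (x, y) = (\<bar>s\<bar>, t)" by (rule twist_eq_if_4_dvd_diff[OF A]) (use s t in simp_all)
  have "t > 0" using t xy by simp
  have "odd t" "odd s" using A s t xy(2) by presburger+
  have inv: "twist (\<bar>s\<bar>, t) = (x, y)"
  proof (cases "s \<ge> 0")
    case True
    have "(s - t) mod 4 \<noteq> 0" using s t xy(2) by presburger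
    then have "twist (s, t) = (x, \<bar>- y\<bar>)" by (rule twist_eq_if_not_4_dvd_diff) (use s t in simp_all)
    then show ?thesis using True xy(4) by simp
  next
    case False
    have "(- s - t) mod 4 = 0" using s t A by presburger
    then have "twist (- s, t) = (\<bar>- x\<bar>, y)" by (rule twist_eq_if_4_dvd_diff) (use s t in simp_all)
    then show ?thesis using False xy(3) by simp
  qed
  have "x \<noteq> 3 * y" using A xy(2) by presburger
  then have "twist (x, y) = (x, y) \<longleftrightarrow> x = y \<or> x = 3 * y"
    using g s t xy(3) by auto
  with g inv \<open>t > 0\<close> \<open>odd t\<close> \<open>odd s\<close> show ?thesis by auto
qed

lemma twist_props_if_not_4_dvd_diff:
  fixes x y :: int
  assumes xy: "odd x" "odd y" "x > 0" "y > 0" and B: "(x - y) mod 4 \<noteq> 0"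
  shows "fst (twist (x, y)) > 0 \<and> snd (twist (x, y)) > 0 \<and> odd (fst (twist (x, y))) \<and> odd (snd (twist (x, y)))
         \<and> twist (twist (x, y)) = (x, y) \<and> (twist (x, y) = (x, y) \<longleftrightarrow> x = y \<or> x = 3 * y)"
proof -
  have "even (x + 3 * y)" "even (x - y)" using xy(1,2) by presburger+
  then obtain s t where s: "x + 3 * y = 2 * s" and t: "x - y = 2 * t" by (blast elim: evenE)
  have g: "twist (x, y) = (s, \<bar>t\<bar>)" by (rule twist_eq_if_not_4_dvd_diff[OF B]) (use s t in simp_all)
  have "s > 0" using s xy by simp
  have "odd t" "odd s" using B s t by presburger+
  have inv: "twist (s, \<bar>t\<bar>) = (x, y)"
  proof (cases "t \<ge> 0")
    case True
    have "(s - t) mod 4 \<noteq> 0" using s t xy(2) by presburger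
    then have "twist (s, t) = (x, \<bar>y\<bar>)" by (rule twist_eq_if_not_4_dvd_diff) (use s t in simp_all)
    then show ?thesis using True xy(4) by simp
  next
    case False
    have "(s - - t) mod 4 = 0" using s t B xy(2) by presburger
    then have "twist (s, - t) = (\<bar>x\<bar>, y)" by (rule twist_eq_if_4_dvd_diff) (use s t in simp_all)
    then show ?thesis using False xy(3) by simp
  qed
  have "x \<noteq> y" using B by auto
  then have "twist (x, y) = (x, y) \<longleftrightarrow> x = y \<or> x = 3 * y"
    using g s t xy(4) by auto
  with g inv \<open>s > 0\<close> \<open>odd t\<close> \<open>odd s\<close> show ?thesis by auto
qed

lemma twist_props:
  fixes x y :: int
  assumes "odd x" "odd y" "x > 0" "y > 0"
  shows "fst (twist (x, y)) > 0 \<and> snd (twist (x, y)) > 0 \<and> odd (fst (twist (x, y))) \<and> odd (snd (twist (x, y)))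
         \<and> twist (twist (x, y)) = (x, y) \<and> (twist (x, y) = (x, y) \<longleftrightarrow> x = y \<or> x = 3 * y)"
  using assms twist_props_if_4_dvd_diff twist_props_if_not_4_dvd_diff by blast

lemma norm_sixth_root_rotation:
  fixes x y s t :: int
  assumes "2 * s = x - 3 * y" "2 * t = x + y"
  shows "s ^ 2 + 3 * t ^ 2 = x ^ 2 + 3 * y ^ 2"
proof -
  have "4 * (s ^ 2 + 3 * t ^ 2) = (2 * s) ^ 2 + 3 * (2 * t) ^ 2" by (simp add: power2_eq_square algebra_simps)
  also have "\<dots> = (x - 3 * y) ^ 2 + 3 * (x + y) ^ 2" by (simp only: assms)
  also have "\<dots> = 4 * (x ^ 2 + 3 * y ^ 2)" by (simp add: power2_eq_square algebra_simps)
  finally show ?thesis by simp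
qed

lemma twist_norm:
  assumes "odd x" "odd y" "twist (x, y) = (u, v)"
  shows "u ^ 2 + 3 * v ^ 2 = x ^ 2 + 3 * y ^ 2"
proof (cases "(x - y) mod 4 = 0")
  case True
  have "even (x - 3 * y)" "even (x + y)" using assms(1,2) by presburger+
  then obtain s t where s: "x - 3 * y = 2 * s" and t: "x + y = 2 * t" by (blast elim: evenE)
  have "u = \<bar>s\<bar>" "v = t" using twist_eq_if_4_dvd_diff[OF True s[symmetric] t[symmetric]] assms(3) by simp_all
  then show ?thesis using norm_sixth_root_rotation[OF s[symmetric] t[symmetric]] by simp
next
  case False
  have "even (x + 3 * y)" "even (x - y)" using assms(1,2) by presburger+
  then obtain s t where s: "x + 3 * y = 2 * s" and t: "x - y = 2 * t" by (blast elim: evenE)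
  have "u = s" "v = \<bar>t\<bar>" using twist_eq_if_not_4_dvd_diff[OF False s[symmetric] t[symmetric]] assms(3) by simp_all
  then show ?thesis using norm_sixth_root_rotation[of s x "- y" t] s t by simp
qed

definition odd_reps :: "nat \<Rightarrow> (int \<times> int) set" where
  "odd_reps e = {p. 0 < fst p \<and> 0 < snd p \<and> odd (fst p) \<and> odd (snd p)
                    \<and> fst p ^ 2 + 3 * snd p ^ 2 = 8 * int e + 4}"

lemma odd_reps_mem:
  "(x, y) \<in> odd_reps e \<longleftrightarrow> 0 < x \<and> 0 < y \<and> odd x \<and> odd y \<and> x ^ 2 + 3 * y ^ 2 = 8 * int e + 4"
  by (simp add: odd_reps_def)

lemma odd_reps_finite: "finite (odd_reps e)"
proof (rule finite_subset)
  show "odd_reps e \<subseteq> {1..8 * int e + 4} \<times> {1..8 * int e + 4}"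
  proof
    fix p assume p: "p \<in> odd_reps e"
    obtain x y where pxy: "p = (x, y)" by (cases p)
    from p have h: "0 < x" "0 < y" "x ^ 2 + 3 * y ^ 2 = 8 * int e + 4" by (auto simp: odd_reps_mem pxy)
    have "x \<le> x ^ 2" "y \<le> y ^ 2" using h by (simp_all add: power2_eq_square)
    moreover have "0 \<le> x ^ 2" "0 \<le> y ^ 2" by simp_all
    ultimately show "p \<in> {1..8 * int e + 4} \<times> {1..8 * int e + 4}" using h pxy by auto
  qed
qed simp

lemma twist_odd_reps: "p \<in> odd_reps e \<Longrightarrow> twist p \<in> odd_reps e"
proof -
  assume p: "p \<in> odd_reps e"
  obtain x y where pxy: "p = (x, y)" by (cases p)
  obtain u v where uv: "twist (x, y) = (u, v)" by (cases "twist (x, y)")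
  have h: "0 < x" "0 < y" "odd x" "odd y" "x ^ 2 + 3 * y ^ 2 = 8 * int e + 4" using p by (auto simp: odd_reps_mem pxy)
  have "u > 0 \<and> v > 0 \<and> odd u \<and> odd v" using twist_props[OF h(3,4,1,2)] uv by simp
  moreover have "u ^ 2 + 3 * v ^ 2 = x ^ 2 + 3 * y ^ 2" using twist_norm[OF h(3,4) uv] .
  ultimately show ?thesis using h by (simp add: pxy uv odd_reps_mem)
qed

lemma twist_odd_reps_inv: "p \<in> odd_reps e \<Longrightarrow> twist (twist p) = p"
  by (cases p) (simp add: odd_reps_mem twist_props)

lemma odd_reps_twist_fixpoints:
  "{p \<in> odd_reps e. twist p = p} = {p \<in> odd_reps e. fst p = snd p} \<union> {p \<in> odd_reps e. fst p = 3 * snd p}"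
proof -
  have "twist p = p \<longleftrightarrow> fst p = snd p \<or> fst p = 3 * snd p" if "p \<in> odd_reps e" for p
    using that by (cases p) (simp add: odd_reps_mem twist_props)
  then have "{p \<in> odd_reps e. twist p = p} = {p \<in> odd_reps e. fst p = snd p \<or> fst p = 3 * snd p}"
    by (intro Collect_cong) auto
  also have "\<dots> = {p \<in> odd_reps e. fst p = snd p} \<union> {p \<in> odd_reps e. fst p = 3 * snd p}" by auto
  finally show ?thesis .
qed

lemma of_nat_card_odd_reps: "(of_nat (card (odd_reps e)) :: bit) =
    of_nat (card {p \<in> odd_reps e. fst p = snd p}) + of_nat (card {p \<in> odd_reps e. fst p = 3 * snd p})"
proof -
  have "(of_nat (card (odd_reps e)) :: bit) = of_nat (card {p \<in> odd_reps e. twist p = p})"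
    by (rule of_nat_card_involution_fixpoints) (auto simp: odd_reps_finite twist_odd_reps twist_odd_reps_inv)
  also have "card {p \<in> odd_reps e. twist p = p}
      = card {p \<in> odd_reps e. fst p = snd p} + card {p \<in> odd_reps e. fst p = 3 * snd p}"
    unfolding odd_reps_twist_fixpoints
  proof (rule card_Un_disjoint)
    show "finite {p \<in> odd_reps e. fst p = snd p}" "finite {p \<in> odd_reps e. fst p = 3 * snd p}"
      using odd_reps_finite by auto
    show "{p \<in> odd_reps e. fst p = snd p} \<inter> {p \<in> odd_reps e. fst p = 3 * snd p} = {}"
      by (auto simp: odd_reps_def)
  qed
  finally show ?thesis by simp
qed

lemma abs_square_root_odd:
  assumes "x ^ 2 = 8 * f + (1::int)"
  shows "\<bar>x\<bar> > 0" "odd \<bar>x\<bar>" "\<bar>x\<bar> ^ 2 = 8 * f + 1"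
proof -
  have "x \<noteq> 0" using assms by (auto, presburger)
  then show "\<bar>x\<bar> > 0" by simp
  have "odd (x ^ 2)" using assms by simp
  then show "odd \<bar>x\<bar>" by simp
  show "\<bar>x\<bar> ^ 2 = 8 * f + 1" using assms by simp
qed

lemma of_nat_card_odd_reps_diagonal:
  "(of_nat (card {p \<in> odd_reps e. fst p = snd p}) :: bit) = (psi oo fps_X ^ 4 :: bit fps) $ e"
proof (cases "4 dvd e \<and> (\<exists>x::int. x ^ 2 = 8 * int (e div 4) + 1)")
  case True
  then obtain x where x: "x ^ 2 = 8 * int (e div 4) + 1" by blast
  define z where "z = \<bar>x\<bar>"
  have z: "z > 0" "odd z" "z ^ 2 = 8 * int (e div 4) + 1" using abs_square_root_odd[OF x] by (simp_all add: z_def)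
  have e4: "int e = 4 * int (e div 4)" using True by auto
  have "{p \<in> odd_reps e. fst p = snd p} = {(z, z)}"
  proof
    show "{(z, z)} \<subseteq> {p \<in> odd_reps e. fst p = snd p}" using z e4 by (simp add: odd_reps_mem)
    show "{p \<in> odd_reps e. fst p = snd p} \<subseteq> {(z, z)}"
    proof
      fix p assume "p \<in> {p \<in> odd_reps e. fst p = snd p}"
      then obtain w where p: "p = (w, w)" "w > 0" "w ^ 2 + 3 * w ^ 2 = 8 * int e + 4"
        by (cases p) (auto simp: odd_reps_mem)
      then have "w ^ 2 = z ^ 2" using z e4 by simp
      then have "w = z" using p(2) z(1) by simp
      then show "p \<in> {(z, z)}" using p by simp
    qed
  qed
  moreover have "(psi oo fps_X ^ 4 :: bit fps) $ e = 1" using True by (auto simp: fps_nth_compose_X_power psi_nth)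
  ultimately show ?thesis by simp
next
  case False
  have "{p \<in> odd_reps e. fst p = snd p} = {}"
  proof (rule ccontr)
    assume "{p \<in> odd_reps e. fst p = snd p} \<noteq> {}"
    then obtain w where p: "w > 0" "odd w" "w ^ 2 + 3 * w ^ 2 = 8 * int e + 4"
      by (auto simp: odd_reps_def)
    obtain a where a: "w ^ 2 = 8 * a + 1" using odd_square_eq_8_mult_add_1[OF p(2)] by blast
    have ea: "int e = 4 * a" using p(3) a by simp
    then have "4 dvd e" by presburger
    moreover have "int (e div 4) = a" using ea by simp
    ultimately show False using False a by auto
  qed
  then have c0: "card {p \<in> odd_reps e. fst p = snd p} = 0" by (simp only: card.empty)
  have d0: "(psi oo fps_X ^ 4 :: bit fps) $ e = 0" using False by (auto simp: fps_nth_compose_X_power psi_nth)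
  show ?thesis by (simp only: c0 d0 of_nat_0)
qed

lemma of_nat_card_odd_reps_triple_diagonal:
  "(of_nat (card {p \<in> odd_reps e. fst p = 3 * snd p}) :: bit) = (fps_X * (psi oo fps_X ^ 12) :: bit fps) $ e"
proof (cases "e \<noteq> 0 \<and> 12 dvd (e - 1) \<and> (\<exists>x::int. x ^ 2 = 8 * int ((e - 1) div 12) + 1)")
  case True
  then obtain x where x: "x ^ 2 = 8 * int ((e - 1) div 12) + 1" by blast
  define z where "z = \<bar>x\<bar>"
  have z: "z > 0" "odd z" "z ^ 2 = 8 * int ((e - 1) div 12) + 1" using abs_square_root_odd[OF x] by (simp_all add: z_def)
  have e12: "int e = 12 * int ((e - 1) div 12) + 1" using True by auto
  have "{p \<in> odd_reps e. fst p = 3 * snd p} = {(3 * z, z)}"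
  proof
    have "(3 * z) ^ 2 = 9 * z ^ 2" by (simp add: power_mult_distrib)
    then show "{(3 * z, z)} \<subseteq> {p \<in> odd_reps e. fst p = 3 * snd p}" using z e12 by (simp add: odd_reps_mem)
    show "{p \<in> odd_reps e. fst p = 3 * snd p} \<subseteq> {(3 * z, z)}"
    proof
      fix p assume "p \<in> {p \<in> odd_reps e. fst p = 3 * snd p}"
      then obtain w where p: "p = (3 * w, w)" "w > 0" "(3 * w) ^ 2 + 3 * w ^ 2 = 8 * int e + 4"
        by (cases p) (auto simp: odd_reps_mem)
      moreover have "(3 * w) ^ 2 = 9 * w ^ 2" by (simp add: power_mult_distrib)
      ultimately have "w ^ 2 = z ^ 2" using z e12 by simp
      then have "w = z" using p(2) z(1) by simp
      then show "p \<in> {(3 * z, z)}" using p by simp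
    qed
  qed
  moreover have "(fps_X * (psi oo fps_X ^ 12) :: bit fps) $ e = 1" using True by (auto simp: fps_nth_compose_X_power psi_nth)
  ultimately show ?thesis by simp
next
  case False
  have "{p \<in> odd_reps e. fst p = 3 * snd p} = {}"
  proof (rule ccontr)
    assume "{p \<in> odd_reps e. fst p = 3 * snd p} \<noteq> {}"
    then obtain w where p: "w > 0" "odd w" "(3 * w) ^ 2 + 3 * w ^ 2 = 8 * int e + 4"
      by (auto simp: odd_reps_def)
    moreover have "(3 * w) ^ 2 = 9 * w ^ 2" by (simp add: power_mult_distrib)
    ultimately have p3: "12 * w ^ 2 = 8 * int e + 4" by simp
    obtain a where a: "w ^ 2 = 8 * a + 1" using odd_square_eq_8_mult_add_1[OF p(2)] by blast
    have ea: "int e = 12 * a + 1" using p3 a by simp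
    then have "e \<noteq> 0" "12 dvd (e - 1)" by presburger+
    moreover have "int ((e - 1) div 12) = a" using ea by simp
    ultimately show False using False a by auto
  qed
  then have c0: "card {p \<in> odd_reps e. fst p = 3 * snd p} = 0" by (simp only: card.empty)
  have d0: "(fps_X * (psi oo fps_X ^ 12) :: bit fps) $ e = 0" using False by (auto simp: fps_nth_compose_X_power psi_nth)
  show ?thesis by (simp only: c0 d0 of_nat_0)
qed

lemma odd_reps_coordinates:
  assumes "(x, y) \<in> odd_reps e"
  shows "\<exists>a b. x ^ 2 = 8 * a + 1 \<and> y ^ 2 = 8 * b + 1 \<and> 0 \<le> a \<and> 0 \<le> b \<and> int e = a + 3 * b"
proof -
  have h: "0 < x" "0 < y" "odd x" "odd y" "x ^ 2 + 3 * y ^ 2 = 8 * int e + 4" using assms by (auto simp: odd_reps_mem)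
  obtain a where a: "x ^ 2 = 8 * a + 1" using odd_square_eq_8_mult_add_1[OF h(3)] by blast
  obtain b where b: "y ^ 2 = 8 * b + 1" using odd_square_eq_8_mult_add_1[OF h(4)] by blast
  have "x ^ 2 > 0" "y ^ 2 > 0" using h by simp_all
  then have "0 \<le> a" "0 \<le> b" using a b by simp_all
  moreover have "int e = a + 3 * b" using h(5) a b by simp
  ultimately show ?thesis using a b by blast
qed

definition psi_pair_support :: "nat \<Rightarrow> nat set" where
  "psi_pair_support e = {i\<in>{0..e}. (\<exists>x::int. x ^ 2 = 8 * int i + 1) \<and> 3 dvd (e - i)
                                       \<and> (\<exists>y::int. y ^ 2 = 8 * int ((e - i) div 3) + 1)}"

lemma inj_on_odd_reps_index: "inj_on (\<lambda>(x, y). nat ((x ^ 2 - 1) div 8)) (odd_reps e)"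
proof (rule inj_onI, clarify)
  fix x y x' y' assume p: "(x, y) \<in> odd_reps e" and q: "(x', y') \<in> odd_reps e"
    and index: "nat ((x ^ 2 - 1) div 8) = nat ((x' ^ 2 - 1) div 8)"
  obtain a b where ab: "x ^ 2 = 8 * a + 1" "y ^ 2 = 8 * b + 1" "0 \<le> a" "0 \<le> b" "int e = a + 3 * b"
    using odd_reps_coordinates[OF p] by auto
  obtain a' b' where ab': "x' ^ 2 = 8 * a' + 1" "y' ^ 2 = 8 * b' + 1" "0 \<le> a'" "0 \<le> b'" "int e = a' + 3 * b'"
    using odd_reps_coordinates[OF q] by auto
  have "a = a'" using index ab ab' by simp
  then have "x ^ 2 = x' ^ 2" "y ^ 2 = y' ^ 2" using ab ab' by simp_all
  moreover have "x > 0" "x' > 0" "y > 0" "y' > 0" using p q by (auto simp: odd_reps_mem)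
  ultimately show "x = x' \<and> y = y'" by simp
qed

lemma odd_reps_index_image: "(\<lambda>(x, y). nat ((x ^ 2 - 1) div 8)) ` odd_reps e = psi_pair_support e"
proof (intro set_eqI iffI)
  fix i assume "i \<in> (\<lambda>(x, y). nat ((x ^ 2 - 1) div 8)) ` odd_reps e"
  then obtain x y where p: "(x, y) \<in> odd_reps e" and i: "i = nat ((x ^ 2 - 1) div 8)" by auto
  obtain a b where ab: "x ^ 2 = 8 * a + 1" "y ^ 2 = 8 * b + 1" "0 \<le> a" "0 \<le> b" "int e = a + 3 * b"
    using odd_reps_coordinates[OF p] by auto
  have "int i = a" using i ab by simp
  then have "i \<le> e" "int (e - i) = 3 * b" using ab by auto
  then have "3 dvd (e - i)" "int ((e - i) div 3) = b" by presburger+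
  then show "i \<in> psi_pair_support e"
    using \<open>i \<le> e\<close> ab \<open>int i = a\<close> by (auto simp: psi_pair_support_def)
next
  fix i assume "i \<in> psi_pair_support e"
  then obtain x y where i: "i \<le> e" "3 dvd (e - i)" and x: "x ^ 2 = 8 * int i + 1"
    and y: "y ^ 2 = 8 * int ((e - i) div 3) + 1" by (auto simp: psi_pair_support_def)
  have "int e = int i + 3 * int ((e - i) div 3)" using i by auto
  then have "(\<bar>x\<bar>, \<bar>y\<bar>) \<in> odd_reps e"
    using abs_square_root_odd[OF x] abs_square_root_odd[OF y] by (simp add: odd_reps_mem)
  moreover have "i = nat ((\<bar>x\<bar> ^ 2 - 1) div 8)" using x by simp
  ultimately show "i \<in> (\<lambda>(x, y). nat ((x ^ 2 - 1) div 8)) ` odd_reps e" by force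
qed

(* The coefficient of q^e on the left counts odd_reps e, and modulo 2 only the fixed points of twist matter. *)
theorem psi_mult_psi_compose_3_bit:
  "(psi :: bit fps) * (psi oo fps_X ^ 3) = (psi oo fps_X ^ 4) + fps_X * (psi oo fps_X ^ 12)"
proof (rule fps_ext)
  fix e
  have "(psi * (psi oo fps_X ^ 3) :: bit fps) $ e = (\<Sum>i\<in>{0..e}. of_bool (i \<in> psi_pair_support e))"
    unfolding fps_mult_nth
    by (rule sum.cong) (auto simp: psi_nth fps_nth_compose_X_power psi_pair_support_def)
  also have "\<dots> = of_nat (card (psi_pair_support e))"
    by (simp add: psi_pair_support_def Int_def)
  also have "card (psi_pair_support e) = card (odd_reps e)"
    using bij_betw_same_card[OF bij_betw_imageI[OF inj_on_odd_reps_index odd_reps_index_image]] ..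
  also have "(of_nat (card (odd_reps e)) :: bit) = ((psi oo fps_X ^ 4) + fps_X * (psi oo fps_X ^ 12)) $ e"
    using of_nat_card_odd_reps of_nat_card_odd_reps_diagonal of_nat_card_odd_reps_triple_diagonal by simp
  finally show "(psi * (psi oo fps_X ^ 3) :: bit fps) $ e = ((psi oo fps_X ^ 4) + fps_X * (psi oo fps_X ^ 12)) $ e" .
qed

section \<open>The eta quotient modulo 2\<close>

lemma euler_prod_cube_bit_compose:
  assumes "k > 0"
  shows "(euler_prod k :: bit fps) ^ 3 = psi oo fps_X ^ k"
proof -
  have "(euler_prod 1 oo fps_X ^ k :: bit fps) ^ 3 = euler_prod 1 ^ 3 oo fps_X ^ k"
    by (rule fps_compose_power) (use assms in simp)
  then show ?thesis using euler_prod_cube_bit by (simp add: euler_prod_eq_compose[OF assms])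
qed

lemma psi_compose_square_bit:
  "k > 0 \<Longrightarrow> (psi oo fps_X ^ k :: bit fps) ^ 2 = psi oo fps_X ^ (2 * k)"
  by (simp add: bit_fps_square[of "psi oo fps_X ^ k"] fps_compose_X_power_compose_X_power mult.commute)

lemma psi_compose_ne_0 [simp]: "psi oo fps_X ^ k \<noteq> (0 :: 'a::comm_ring_1 fps)"
proof
  assume "psi oo fps_X ^ k = (0 :: 'a fps)"
  then have "(psi oo fps_X ^ k :: 'a fps) $ 0 = 0" by simp
  then show False by simp
qed

lemma psi_ne_0 [simp]: "psi \<noteq> (0 :: 'a::comm_ring_1 fps)"
  using psi_compose_ne_0[of 1] by auto

lemma eta_quotient_relation_bit:
  fixes c :: "bit fps"
  assumes "c * (euler_prod 1 * euler_prod 6 ^ 3) ^ 3 = (euler_prod 2 * euler_prod 3 ^ 3) ^ 3"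
  shows "c * (psi oo fps_X ^ 3) ^ 3 = psi"
proof -
  let ?D = "\<lambda>k. psi oo fps_X ^ k :: bit fps"
  have "c * (psi * ?D 6 ^ 3) = ?D 2 * ?D 3 ^ 3"
    using assms by (simp add: power_mult_distrib euler_prod_cube_bit_compose)
  moreover have "?D 6 = ?D 3 ^ 2" "?D 2 = psi ^ 2"
    by (simp_all add: psi_compose_square_bit bit_fps_square[of psi])
  ultimately have "(psi * ?D 3 ^ 3) * (c * ?D 3 ^ 3) = (psi * ?D 3 ^ 3) * psi"
    by (simp add: algebra_simps power2_eq_square eval_nat_numeral)
  then show ?thesis by simp
qed

lemma mult_compose_X_power_compose_X_power:
  "k > 0 \<Longrightarrow> m > 0 \<Longrightarrow>
   (f * (g oo fps_X ^ k)) oo fps_X ^ m = (f oo fps_X ^ m) * (g oo fps_X ^ (k * m) :: 'a::idom fps)"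
  by (simp add: fps_compose_mult_distrib fps_compose_X_power_compose_X_power)

lemma inverse_psi_compose_mult_bit: "inverse (psi oo fps_X ^ k) * (psi oo fps_X ^ k) = (1 :: bit fps)"
  by (rule inverse_mult_eq_1) simp

lemma psi_div_psi_compose_3_bit:
  "psi * inverse (psi oo fps_X ^ 3)
     = ((psi oo fps_X ^ 2) * inverse (psi oo fps_X ^ 3) oo fps_X ^ 2) + fps_X * (psi oo fps_X ^ 6 :: bit fps)"
  (is "?g = (?h oo fps_X ^ 2) + fps_X * ?D6")
proof -
  have g: "?g * (psi oo fps_X ^ 3) = psi"
    using inverse_psi_compose_mult_bit[of 3] by (simp add: mult.assoc)
  have "(?h oo fps_X ^ 2) * ?D6 = psi oo fps_X ^ 4"
    using mult_compose_X_power_compose_X_power[of 3 2 ?h psi] inverse_psi_compose_mult_bit[of 3]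
    by (simp add: mult.assoc fps_compose_X_power_compose_X_power)
  moreover have "?g * ?D6 = (?g * (psi oo fps_X ^ 3)) * (psi oo fps_X ^ 3)"
    using psi_compose_square_bit[of 3] by (simp add: power2_eq_square mult.assoc)
  then have "?g * ?D6 = (psi oo fps_X ^ 4) + fps_X * (psi oo fps_X ^ 12)"
    by (simp only: g psi_mult_psi_compose_3_bit)
  ultimately have "?g * ?D6 = ((?h oo fps_X ^ 2) + fps_X * ?D6) * ?D6"
    using psi_compose_square_bit[of 6] by (simp add: algebra_simps power2_eq_square)
  then show ?thesis
    by simp
qed

lemma relation_imp_minus_X_eq_compose_bit:
  fixes c :: "bit fps"
  assumes c: "c * (psi oo fps_X ^ 3) ^ 3 = psi"
  shows "c - fps_X = psi * inverse (psi oo fps_X ^ 3) oo fps_X ^ 4"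
proof -
  let ?D = "\<lambda>k. psi oo fps_X ^ k :: bit fps"
  have "(a :: bit fps) ^ 3 * a = (a ^ 2) ^ 2" for a
    by (simp add: eval_nat_numeral)
  then have "?D 12 = ?D 3 ^ 3 * ?D 3"
    using psi_compose_square_bit[of 3] psi_compose_square_bit[of 6] by (simp only:) simp
  then have "c * ?D 12 = (c * ?D 3 ^ 3) * ?D 3"
    by (simp add: mult.assoc)
  also have "\<dots> = ?D 4 + fps_X * ?D 12"
    by (simp only: c psi_mult_psi_compose_3_bit)
  finally have "(c - fps_X) * ?D 12 = ?D 4"
    by (simp add: algebra_simps)
  also have "?D 4 = (psi * inverse (?D 3) oo fps_X ^ 4) * ?D 12"
    using mult_compose_X_power_compose_X_power[of 3 4 "psi * inverse (?D 3)" psi]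
      inverse_psi_compose_mult_bit[of 3]
    by (simp add: mult.assoc)
  finally show ?thesis
    by simp
qed

lemma coefficient_from_relation_bit:
  fixes c :: "bit fps"
  assumes "c * (psi oo fps_X ^ 3) ^ 3 = psi"
  shows "c $ (24 * t + 4) = psi $ t"
proof -
  have "c $ (24 * t + 4) = (c - fps_X) $ (4 * (6 * t + 1))"
    by (simp add: algebra_simps)
  also have "\<dots> = (psi * inverse (psi oo fps_X ^ 3)) $ (6 * t + 1)"
    by (simp only: relation_imp_minus_X_eq_compose_bit[OF assms] fps_compose_X_power_nth_mult zero_less_numeral)
  also have "\<dots> = (psi oo fps_X ^ 6) $ (6 * t)"
    by (simp add: psi_div_psi_compose_3_bit fps_nth_compose_X_power)
  also have "\<dots> = psi $ t"
    by (simp only: fps_compose_X_power_nth_mult zero_less_numeral)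
  finally show ?thesis .
qed

definition eta_quotient :: "int fps" where
  "eta_quotient = euler_prod 2 * euler_prod 3 ^ 3 * fps_right_inverse (euler_prod 1 * euler_prod 6 ^ 3) 1"

lemma eta_quotient_mult:
  "eta_quotient * (euler_prod 1 * euler_prod 6 ^ 3) = euler_prod 2 * euler_prod 3 ^ 3"
proof -
  have "(euler_prod 1 * euler_prod 6 ^ 3) * fps_right_inverse (euler_prod 1 * euler_prod 6 ^ 3 :: int fps) 1 = 1"
    by (rule fps_right_inverse) (simp add: fps_nth_power_0)
  then show ?thesis by (simp add: eta_quotient_def algebra_simps)
qed

lemma j6P_eq_of_int_fps: "j6P = of_int_fps (eta_quotient ^ 3)"
proof -
  let ?D = "euler_prod 1 * euler_prod 6 ^ 3 :: rat fps"
  have "of_int_fps (eta_quotient * (euler_prod 1 * euler_prod 6 ^ 3))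
      = (of_int_fps (euler_prod 2 * euler_prod 3 ^ 3) :: rat fps)"
    by (simp only: eta_quotient_mult)
  then have "euler_prod 2 * euler_prod 3 ^ 3 = of_int_fps eta_quotient * ?D"
    by (simp only: of_int_fps_mult of_int_fps_power of_int_fps_euler_prod)
  moreover have "?D * inverse ?D = 1"
    by (rule inverse_mult_eq_1') (simp add: fps_nth_power_0)
  ultimately have "(euler_prod 2 * euler_prod 3 ^ 3) / ?D = of_int_fps eta_quotient"
    by (simp add: fps_divide_unit fps_nth_power_0 mult.assoc)
  then show ?thesis
    by (simp add: j6P_def qpoch_eq_euler_prod of_int_fps_power)
qed

lemma bit_of_int_eq_0_imp_even: "(of_int z :: bit) = 0 \<Longrightarrow> even z"
proof (rule ccontr)
  assume "of_int z = (0::bit)" "odd z"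
  then obtain k where "z = 2 * k + 1" by (auto elim: oddE)
  then have "(of_int z :: bit) = 1" by simp
  with \<open>of_int z = (0::bit)\<close> show False by simp
qed

lemma eta_quotient_cube_nth_even:
  assumes "\<not> (\<exists>x::int. x ^ 2 = 8 * int t + 1)"
  shows "even ((eta_quotient ^ 3) $ (24 * t + 4))"
proof -
  have "of_int_fps ((eta_quotient * (euler_prod 1 * euler_prod 6 ^ 3)) ^ 3)
      = (of_int_fps ((euler_prod 2 * euler_prod 3 ^ 3) ^ 3) :: bit fps)"
    by (simp only: eta_quotient_mult)
  then have "of_int_fps (eta_quotient ^ 3) * (euler_prod 1 * euler_prod 6 ^ 3) ^ 3
      = ((euler_prod 2 * euler_prod 3 ^ 3) ^ 3 :: bit fps)"
    by (simp only: of_int_fps_mult of_int_fps_power of_int_fps_euler_prod power_mult_distrib)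
  then have "(of_int_fps (eta_quotient ^ 3) :: bit fps) $ (24 * t + 4) = psi $ t"
    by (intro coefficient_from_relation_bit eta_quotient_relation_bit)
  then show ?thesis
    using assms by (intro bit_of_int_eq_0_imp_even) (simp add: psi_nth)
qed

(* For N < 0 the argument 3N is below -1, where J6 vanishes by definition. *)
lemma J6_three_times_even:
  fixes N :: int
  assumes N: "N mod 8 = 1" and not_square: "\<not> (\<exists>x. x ^ 2 = N)"
  shows "\<exists>m::int. J6 (3 * N) = of_int (2 * m)"
proof (cases "N < 0")
  case True
  then have "3 * N < -1" using N by presburger
  then show ?thesis by (simp add: J6_def)
next
  case False
  define t where "t = nat (N div 8)"
  have N_eq: "N = 8 * int t + 1"
    using N False div_mult_mod_eq[of N 8] by (simp add: t_def)
  then have "J6 (3 * N) = of_int ((eta_quotient ^ 3) $ (24 * t + 4))"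
    by (simp add: J6_def j6P_eq_of_int_fps nat_add_distrib nat_mult_distrib) (simp add: add.commute)
  moreover have "even ((eta_quotient ^ 3) $ (24 * t + 4))"
    using not_square N_eq by (intro eta_quotient_cube_nth_even) auto
  ultimately show ?thesis by (auto elim: evenE)
qed

lemma not_square_if_prime_multiplicity_odd:
  fixes q P B x :: int
  assumes "prime q" "\<not> q dvd B" "P \<noteq> 0"
  shows "x ^ 2 \<noteq> P ^ 2 * q * B"
proof
  assume sq: "x ^ 2 = P ^ 2 * q * B"
  have q: "prime_elem q" using assms(1) unfolding prime_def by blast
  have "B \<noteq> 0" using assms(2) by auto
  then have "x \<noteq> 0" using sq assms(1,3) by auto
  have "multiplicity q (x ^ 2) = 2 * multiplicity q x"
    using q \<open>x \<noteq> 0\<close> by (simp add: prime_elem_multiplicity_power_distrib)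
  moreover have "multiplicity q (P ^ 2 * q * B) = 2 * multiplicity q P + 1"
    using q assms \<open>B \<noteq> 0\<close>
    by (simp add: prime_elem_multiplicity_mult_distrib prime_elem_multiplicity_power_distrib
        multiplicity_self not_dvd_imp_multiplicity_0 prime_elem_not_unit)
  ultimately have "2 * multiplicity q x = 2 * multiplicity q P + 1" using sq by simp
  then show False by presburger
qed

lemma odd_square_mod_8: "odd (x::int) \<Longrightarrow> x ^ 2 mod 8 = 1"
  using odd_square_eq_8_mult_add_1 by fastforce

lemma odd_prime_not_dvd:
  fixes q j m :: int
  assumes "prime q" "odd q" "\<not> q dvd j"
  shows "\<not> q dvd 8 * q * m + 8 * j + q"
proof
  assume "q dvd 8 * q * m + 8 * j + q"
  then have "q dvd (8 * q * m + 8 * j + q) - q * (8 * m + 1)"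
    by (intro dvd_diff) auto
  then have "q dvd 2 ^ 3 * j"
    by (simp add: algebra_simps)
  then have "q dvd 2 ^ 3 \<or> q dvd j"
    using assms(1) by (simp only: prime_dvd_mult_iff)
  then have "q dvd 2 \<or> q dvd j"
    using assms(1) prime_dvd_power by blast
  moreover have "\<not> q dvd 2"
    using assms(1,2) primes_dvd_imp_eq[of q 2] by auto
  ultimately show False using assms(3) by blast
qed

lemma square_mult_shifted_mod_8:
  fixes P q j m :: int
  assumes "odd P" "odd q"
  shows "(P ^ 2 * q * (8 * q * m + 8 * j + q)) mod 8 = 1"
proof -
  have "P ^ 2 * q * (8 * q * m + 8 * j + q) = 8 * (P ^ 2 * q * (q * m + j)) + P ^ 2 * q ^ 2"
    by (simp add: power2_eq_square algebra_simps)
  moreover have "(P ^ 2 * q ^ 2) mod 8 = 1"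
    using odd_square_mod_8[of "P * q"] assms by (simp add: power_mult_distrib)
  ultimately show ?thesis by simp
qed

lemma odd_if_mod_8_in_3_5_7: "(p :: nat) mod 8 \<in> {3, 5, 7} \<Longrightarrow> odd p"
proof -
  assume "p mod 8 \<in> {3, 5, 7}"
  then have "p mod 8 mod 2 = 1" by auto
  then show ?thesis by (simp add: mod_mod_cancel odd_iff_mod_2_eq_one)
qed

lemma J6_argument_even:
  fixes P q j :: int and n :: nat
  assumes "odd P" "prime q" "odd q" "\<not> q dvd j"
  shows "\<exists>m::int. J6 (3 * (P ^ 2 * q * (8 * q * int n + 8 * j + q))) = of_int (2 * m)"
proof (rule J6_three_times_even)
  have "\<not> q dvd 8 * q * int n + 8 * j + q"
    using assms(2-4) by (rule odd_prime_not_dvd)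
  moreover have "P \<noteq> 0" using \<open>odd P\<close> by auto
  ultimately show "\<not> (\<exists>x. x ^ 2 = P ^ 2 * q * (8 * q * int n + 8 * j + q))"
    using not_square_if_prime_multiplicity_odd \<open>prime q\<close> by blast
  show "(P ^ 2 * q * (8 * q * int n + 8 * j + q)) mod 8 = 1"
    using assms(1,3) by (rule square_mult_shifted_mod_8)
qed

theorem theorem3p4:
  fixes k n :: nat and p :: "nat \<Rightarrow> nat" and j :: int
  assumes primes: "\<forall>i\<in>{1..k+1}. prime (p i) \<and> p i mod 8 \<in> {3, 5, 7}"
    and ndvd: "\<not> int (p (k+1)) dvd j"
  shows "\<exists>m::int. J6 (3 * (\<Prod>i\<in>{1..k}. int (p i) ^ 2) * int (p (k+1))
                   * (8 * int (p (k+1)) * int n + 8 * j + int (p (k+1)))) = of_int (2 * m)"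
proof -
  \<comment> \<open>Only the oddness of p 1, ..., p k is used, not their primality or residues mod 8.\<close>
  define P where "P = (\<Prod>i\<in>{1..k}. int (p i))"
  define q where "q = int (p (k+1))"
  have "odd P"
    using primes by (auto simp: P_def even_prod_iff intro!: odd_if_mod_8_in_3_5_7)
  moreover have "prime q" "odd q"
    using primes odd_if_mod_8_in_3_5_7[of "p (k+1)"] by (auto simp: q_def)
  ultimately have "\<exists>m::int. J6 (3 * (P ^ 2 * q * (8 * q * int n + 8 * j + q))) = of_int (2 * m)"
    using ndvd by (intro J6_argument_even) (auto simp: q_def)
  moreover have "3 * (\<Prod>i\<in>{1..k}. int (p i) ^ 2) * int (p (k+1)) * (8 * int (p (k+1)) * int n + 8 * j + int (p (k+1)))
      = 3 * (P ^ 2 * q * (8 * q * int n + 8 * j + q))"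
    by (simp add: P_def q_def prod_power_distrib mult.assoc)
  ultimately show ?thesis
    by (simp only:)
qed

end
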